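(* Let $G$ be a finite abelian group and let $f$ be an automorphism of $\mathcal{P}_{0}(G)$ with pullback $g$. If $H$ is a subgroup of $G$, then $f(H)=g[H]=\{g(h):h\in H\}$.
   Context: For an additively written finite abelian group $G$, $\mathcal{P}_{0}(G)$ is the monoid of all subsets of $G$ containing $0$, with setwise addition and identity $\{0\}$. Every automorphism $f$ of $\mathcal{P}_0(G)$ maps $2$-element sets to $2$-element sets; the pullback of $f$ is the bijection $g:G\to G$ defined by $g(0)=0$ and, for nonzero $a\in G$, by $f(\{0,a\})=\{0,g(a)\}$. *)

theory Defs
  imports Main
begin

definition P0 :: "'a::ab_group_add set set" where
  "P0 = {A. 0 \<in> A}"

definition set_add :: "'a::ab_group_add set \<Rightarrow> 'a set \<Rightarrow> 'a set" where
  "set_add A B = {a + b | a b. a \<in> A \<and> b \<in> B}"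

text \<open>Monoid automorphism of P_0(G) (only its values on P_0(G) matter).\<close>

definition P0_automorphism :: "('a::ab_group_add set \<Rightarrow> 'a set) \<Rightarrow> bool" where
  "P0_automorphism f \<longleftrightarrow>
     bij_betw f P0 P0 \<and>
     (\<forall>A\<in>P0. \<forall>B\<in>P0. f (set_add A B) = set_add (f A) (f B)) \<and>
     f {0} = {0}"

definition pullback :: "('a::ab_group_add set \<Rightarrow> 'a set) \<Rightarrow> 'a \<Rightarrow> 'a" where
  "pullback f a = (if a = 0 then 0 else (THE b. f {0, a} = {0, b}))"

definition add_subgroup :: "'a::ab_group_add set \<Rightarrow> bool" where
  "add_subgroup H \<longleftrightarrow> 0 \<in> H \<and> (\<forall>x\<in>H. \<forall>y\<in>H. x + y \<in> H) \<and> (\<forall>x\<in>H. - x \<in> H)"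

end

theory Submission
  imports Defs
begin

(* An automorphism f preserves the set UNIV, hence the relation "X + Z = G" and with it the
   preorder X \<preceq> Y given by inclusion of the families of such partners Z.  The sets {0, a},
   a \<noteq> 0, are exactly the minimal nontrivial elements of this preorder, so f permutes them
   and the pullback g is a bijection with f {0, a} = {0, g a}.  A subgroup H satisfies H + H = H,
   and for such an idempotent B one has A + B = B iff A \<subseteq> B; applying f to {0, a} + H = H
   shows a \<in> H iff g a \<in> f H, whence f H = g[H]. *)

lemma set_add_P0: "A \<in> P0 \<Longrightarrow> B \<in> P0 \<Longrightarrow> set_add A B \<in> P0"
  unfolding P0_def set_add_def by force

lemma set_add_commute: "set_add A B = set_add B A"
  unfolding set_add_def by (auto intro: add.commute)

lemma set_add_UNIV: "A \<in> P0 \<Longrightarrow> set_add A UNIV = UNIV"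
  unfolding set_add_def P0_def by force

lemma UNIV_in_P0: "UNIV \<in> P0"
  unfolding P0_def by simp

lemma zero_pair_in_P0: "{0, a} \<in> P0"
  unfolding P0_def by simp

lemma set_add_idem_absorb_iff:
  assumes "A \<in> P0" "B \<in> P0" "set_add B B = B"
  shows "set_add A B = B \<longleftrightarrow> A \<subseteq> B"
proof
  assume "set_add A B = B"
  then show "A \<subseteq> B"
    using \<open>B \<in> P0\<close> unfolding set_add_def P0_def by force
next
  assume "A \<subseteq> B"
  then have "set_add A B \<subseteq> set_add B B"
    unfolding set_add_def by blast
  moreover have "B \<subseteq> set_add A B"
    using \<open>A \<in> P0\<close> unfolding set_add_def P0_def by force
  ultimately show "set_add A B = B"
    using assms(3) by blast
qed

lemma add_subgroup_in_P0: "add_subgroup H \<Longrightarrow> H \<in> P0"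
  unfolding add_subgroup_def P0_def by simp

lemma add_subgroup_set_add_self: "add_subgroup H \<Longrightarrow> set_add H H = H"
  unfolding add_subgroup_def set_add_def by (auto intro: exI[of _ 0])

definition complements :: "'a::ab_group_add set \<Rightarrow> 'a set set" where
  "complements X = {Z \<in> P0. set_add X Z = UNIV}"

definition complement_minimal :: "'a::ab_group_add set \<Rightarrow> bool" where
  "complement_minimal X \<longleftrightarrow> X \<noteq> {0} \<and>
     (\<forall>Y\<in>P0. complements Y \<subseteq> complements X \<longrightarrow> Y = {0} \<or> complements X \<subseteq> complements Y)"

lemma complements_subset_P0: "complements X \<subseteq> P0"
  unfolding complements_def by blast

lemma complements_mono: "X \<subseteq> Y \<Longrightarrow> complements X \<subseteq> complements Y"
  unfolding complements_def set_add_def by blast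

lemma set_add_translate: "set_add ((\<lambda>x. x + t) ` X) Z = (\<lambda>x. x + t) ` set_add X Z"
  unfolding set_add_def by (auto simp: image_iff ac_simps) (metis add.commute, metis add.assoc add.commute)

lemma complements_translate: "complements ((\<lambda>x. x + t) ` X) = complements X"
proof -
  have "(\<lambda>x. x + t) ` S = UNIV \<longleftrightarrow> S = UNIV" for S :: "'a set"
    by (metis add_right_imp_eq surj_plus_right inj_image_eq_iff injI)
  then show ?thesis
    unfolding complements_def set_add_translate by simp
qed

lemma zero_pair_complement_minimal:
  fixes a :: "'a::ab_group_add"
  assumes "a \<noteq> 0"
  shows "complement_minimal {0, a}"
proof -
  have "complements {0, a} \<subseteq> complements Y"
    if Y: "Y \<in> P0" "complements Y \<subseteq> complements {0, a}" "Y \<noteq> {0}" for Y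
  proof -
    obtain b where b: "b \<in> Y" "b \<noteq> 0" using Y(1,3) unfolding P0_def by blast
    have "0 \<in> Y" using Y(1) unfolding P0_def by simp
    obtain t where "Y \<subseteq> (\<lambda>x. x + t) ` {0, a}"
    proof (cases "{0, a} = (UNIV :: 'a set)")
      case True
      then show thesis using that[of 0] by simp
    next
      case False
      then obtain g where g: "g \<notin> {0, a}" by blast
      \<comment> \<open>Z is the largest set with g \<notin> {0, a} + Z, so Y + Z \<noteq> G forces Y into a translate of {0, a}.\<close>
      define Z where "Z = {z. g - z \<notin> {0, a}}"
      have "Z \<in> P0" using g unfolding Z_def P0_def by simp
      have "g \<notin> set_add {0, a} Z"
        unfolding set_add_def Z_def by (auto simp: algebra_simps)
      then have "Z \<notin> complements Y"
        using Y(2) unfolding complements_def by blast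
      then obtain h where h: "h \<notin> set_add Y Z"
        using \<open>Z \<in> P0\<close> unfolding complements_def by blast
      have "y + (g - h) \<in> {0, a}" if "y \<in> Y" for y
      proof (rule ccontr)
        assume "y + (g - h) \<notin> {0, a}"
        then have "h - y \<in> Z" unfolding Z_def by (simp add: algebra_simps)
        then have "y + (h - y) \<in> set_add Y Z" using that unfolding set_add_def by blast
        then show False using h by simp
      qed
      then have "Y \<subseteq> (\<lambda>x. x + (h - g)) ` {0, a}"
        by (force simp: algebra_simps)
      then show thesis by (rule that)
    qed
    moreover from this have "0 \<in> {t, a + t}" "b \<in> {t, a + t}"
      using b \<open>0 \<in> Y\<close> by auto
    ultimately have "Y = (\<lambda>x. x + t) ` {0, a}"
      using assms b \<open>0 \<in> Y\<close> by auto
    then show ?thesis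
      by (simp only: complements_translate subset_refl)
  qed
  then show ?thesis
    using assms unfolding complement_minimal_def by auto
qed

lemma complement_minimal_imp_zero_pair:
  fixes X :: "'a::ab_group_add set"
  assumes "X \<in> P0" "complement_minimal X"
  obtains a where "a \<noteq> 0" "X = {0, a}"
proof -
  have "0 \<in> X" using assms(1) unfolding P0_def by simp
  moreover obtain a where a: "a \<in> X" "a \<noteq> 0"
    using assms \<open>0 \<in> X\<close> unfolding complement_minimal_def by blast
  ultimately have "{0, a} \<subseteq> X" by simp
  show thesis
  proof (cases "X = {0, a}")
    case True
    then show thesis using that a(2) by blast
  next
    case False
    then obtain c where c: "c \<in> X" "c \<noteq> 0" "c \<noteq> a" using \<open>{0, a} \<subseteq> X\<close> by blast
    \<comment> \<open>Z misses c and c - a, so c \<notin> {0, a} + Z; but no h has h, h - a, h - c all in {c, c - a}.\<close>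
    define Z where "Z = - {c, c - a}"
    have "Z \<in> P0" unfolding Z_def P0_def using c by auto
    have "h \<in> set_add X Z" for h
    proof -
      have "\<exists>x\<in>{0, a, c}. h - x \<in> Z"
        unfolding Z_def using a c by (auto simp: algebra_simps)
      then obtain x where "x \<in> X" "h - x \<in> Z" using \<open>0 \<in> X\<close> a c by blast
      then have "x + (h - x) \<in> set_add X Z" unfolding set_add_def by blast
      then show ?thesis by simp
    qed
    then have "Z \<in> complements X" using \<open>Z \<in> P0\<close> unfolding complements_def by blast
    moreover have "c \<notin> set_add {0, a} Z"
      unfolding set_add_def Z_def by (auto simp: algebra_simps)
    then have "Z \<notin> complements {0, a}" unfolding complements_def by auto
    moreover have "complements {0, a} \<subseteq> complements X"
      using \<open>{0, a} \<subseteq> X\<close> by (rule complements_mono)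
    ultimately show thesis
      using assms(2) zero_pair_in_P0 a(2) unfolding complement_minimal_def by blast
  qed
qed

lemma pullback_eqI:
  assumes "a \<noteq> 0" "b \<noteq> 0" "f {0, a} = {0, b}"
  shows "pullback f a = b"
proof -
  have "(THE x. f {0, a} = {0, x}) = b"
  proof (rule the_equality)
    fix x assume "f {0, a} = {0, x}"
    then show "x = b" using assms(2,3) by (auto simp: doubleton_eq_iff)
  qed (rule assms(3))
  then show ?thesis
    using assms(1) unfolding pullback_def by simp
qed

context
  fixes f :: "'a::ab_group_add set \<Rightarrow> 'a set"
  assumes aut: "P0_automorphism f"
begin

lemma automorphism_bij: "bij_betw f P0 P0"
  using aut unfolding P0_automorphism_def by blast

lemma automorphism_set_add: "A \<in> P0 \<Longrightarrow> B \<in> P0 \<Longrightarrow> f (set_add A B) = set_add (f A) (f B)"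
  using aut unfolding P0_automorphism_def by blast

lemma automorphism_in_P0: "A \<in> P0 \<Longrightarrow> f A \<in> P0"
  by (rule bij_betw_apply[OF automorphism_bij])

lemma automorphism_inj: "inj_on f P0"
  by (rule bij_betw_imp_inj_on[OF automorphism_bij])

lemma automorphism_image_P0: "f ` P0 = P0"
  by (rule bij_betw_imp_surj_on[OF automorphism_bij])

lemma automorphism_eq_iff: "A \<in> P0 \<Longrightarrow> B \<in> P0 \<Longrightarrow> f A = f B \<longleftrightarrow> A = B"
  by (rule inj_on_eq_iff[OF automorphism_inj])

lemma automorphism_eq_zero_iff: "A \<in> P0 \<Longrightarrow> f A = {0} \<longleftrightarrow> A = {0}"
  using aut automorphism_eq_iff[of A "{0}"] zero_pair_in_P0[of 0]
  unfolding P0_automorphism_def by simp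

lemma automorphism_UNIV: "f UNIV = UNIV"
proof -
  have "UNIV \<in> f ` P0"
    by (simp add: automorphism_image_P0 UNIV_in_P0)
  then obtain Z where Z: "Z \<in> P0" "f Z = UNIV"
    by blast
  have "f UNIV = f (set_add Z UNIV)" using set_add_UNIV[OF Z(1)] by simp
  also have "\<dots> = set_add UNIV (f UNIV)"
    using automorphism_set_add[OF Z(1) UNIV_in_P0] Z(2) by simp
  also have "\<dots> = UNIV"
    using set_add_UNIV[OF automorphism_in_P0[OF UNIV_in_P0]] by (simp add: set_add_commute)
  finally show ?thesis .
qed

lemma automorphism_complements:
  assumes "X \<in> P0"
  shows "complements (f X) = f ` complements X"
proof -
  have "f Z \<in> complements (f X) \<longleftrightarrow> Z \<in> complements X" if "Z \<in> P0" for Z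
  proof -
    have "set_add (f X) (f Z) = UNIV \<longleftrightarrow> f (set_add X Z) = f UNIV"
      by (simp add: automorphism_set_add[OF assms that] automorphism_UNIV)
    also have "\<dots> \<longleftrightarrow> set_add X Z = UNIV"
      by (rule automorphism_eq_iff[OF set_add_P0[OF assms that] UNIV_in_P0])
    finally show ?thesis
      using that automorphism_in_P0[OF that] unfolding complements_def by blast
  qed
  note complement_iff = this
  show ?thesis
  proof (intro set_eqI iffI)
    fix W assume W: "W \<in> complements (f X)"
    then have "W \<in> f ` P0"
      using complements_subset_P0 automorphism_image_P0 by blast
    then obtain Z where "Z \<in> P0" "W = f Z" by blast
    then show "W \<in> f ` complements X"
      using W complement_iff by blast
  next
    fix W assume "W \<in> f ` complements X"
    then show "W \<in> complements (f X)"
      using complements_subset_P0 complement_iff by blast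
  qed
qed

lemma automorphism_complements_subset_iff:
  assumes "X \<in> P0" "Y \<in> P0"
  shows "complements (f Y) \<subseteq> complements (f X) \<longleftrightarrow> complements Y \<subseteq> complements X"
proof -
  have "f ` complements Y \<subseteq> f ` complements X \<longleftrightarrow> complements Y \<subseteq> complements X"
    using automorphism_inj complements_subset_P0 by (blast dest: inj_onD)
  then show ?thesis
    using assms by (simp add: automorphism_complements)
qed

lemma automorphism_complement_minimal_iff:
  assumes "X \<in> P0"
  shows "complement_minimal (f X) \<longleftrightarrow> complement_minimal X"
proof -
  have "(\<forall>Y\<in>f ` P0. P Y) \<longleftrightarrow> (\<forall>W\<in>P0. P (f W))" for P
    by blast
  then have ball_P0: "(\<forall>Y\<in>P0. P Y) \<longleftrightarrow> (\<forall>W\<in>P0. P (f W))" for P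
    by (simp only: automorphism_image_P0)
  have "complement_minimal (f X) \<longleftrightarrow> f X \<noteq> {0} \<and> (\<forall>W\<in>P0.
      complements (f W) \<subseteq> complements (f X) \<longrightarrow> f W = {0} \<or> complements (f X) \<subseteq> complements (f W))"
    unfolding complement_minimal_def
    by (rule arg_cong[OF ball_P0[of "\<lambda>Y. complements Y \<subseteq> complements (f X) \<longrightarrow>
      Y = {0} \<or> complements (f X) \<subseteq> complements Y"]])
  also have "\<dots> \<longleftrightarrow> complement_minimal X"
    unfolding complement_minimal_def using assms
    by (simp add: automorphism_complements_subset_iff automorphism_eq_zero_iff)
  finally show ?thesis .
qed

lemma automorphism_zero_pair:
  assumes "a \<noteq> 0"
  obtains b where "b \<noteq> 0" "f {0, a} = {0, b}"
proof -
  have "complement_minimal (f {0, a})"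
    using zero_pair_complement_minimal[OF assms] automorphism_complement_minimal_iff zero_pair_in_P0
    by blast
  then show thesis
    using complement_minimal_imp_zero_pair automorphism_in_P0[OF zero_pair_in_P0] that by blast
qed

lemma automorphism_image_zero_pair: "a \<noteq> 0 \<Longrightarrow> f {0, a} = {0, pullback f a}"
  by (metis automorphism_zero_pair pullback_eqI)

lemma surj_pullback: "surj (pullback f)"
proof -
  have "b \<in> range (pullback f)" for b
  proof (cases "b = 0")
    case True
    then have "b = pullback f 0" unfolding pullback_def by simp
    then show ?thesis by (rule image_eqI) simp
  next
    case False
    have "{0, b} \<in> f ` P0" using automorphism_image_P0 zero_pair_in_P0 by simp
    then obtain X where X: "X \<in> P0" "f X = {0, b}" by blast
    then have "complement_minimal X"
      using automorphism_complement_minimal_iff[OF X(1)] zero_pair_complement_minimal[OF False]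
      by (simp only: X(2))
    then obtain a where "a \<noteq> 0" "X = {0, a}"
      using X(1) complement_minimal_imp_zero_pair by blast
    then have "b = pullback f a"
      using pullback_eqI[of a b f] False X(2) by simp
    then show ?thesis by (rule image_eqI) simp
  qed
  then show ?thesis by blast
qed

lemma pullback_mem_image_iff:
  assumes "B \<in> P0" "set_add B B = B"
  shows "pullback f a \<in> f B \<longleftrightarrow> a \<in> B"
proof (cases "a = 0")
  case True
  then show ?thesis
    using assms(1) automorphism_in_P0[OF assms(1)] unfolding pullback_def P0_def by simp
next
  case False
  have fB: "f B \<in> P0" using automorphism_in_P0[OF assms(1)] .
  have fB_idem: "set_add (f B) (f B) = f B"
    using automorphism_set_add[OF assms(1) assms(1)] assms(2) by simp
  have "pullback f a \<in> f B \<longleftrightarrow> set_add {0, pullback f a} (f B) = f B"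
    using set_add_idem_absorb_iff[OF zero_pair_in_P0 fB fB_idem] fB by (simp add: P0_def)
  also have "\<dots> \<longleftrightarrow> f (set_add {0, a} B) = f B"
    using automorphism_set_add[OF zero_pair_in_P0 assms(1)] automorphism_image_zero_pair[OF False]
    by simp
  also have "\<dots> \<longleftrightarrow> set_add {0, a} B = B"
    using automorphism_eq_iff set_add_P0 zero_pair_in_P0 assms(1) by blast
  also have "\<dots> \<longleftrightarrow> a \<in> B"
    using set_add_idem_absorb_iff[OF zero_pair_in_P0 assms] assms(1) unfolding P0_def by simp
  finally show ?thesis .
qed

end

theorem lemma2p4:
  fixes f :: "'a::{ab_group_add, finite} set \<Rightarrow> 'a set"
    and H :: "'a set"
  assumes "P0_automorphism f"
    and "add_subgroup H"
  shows "f H = pullback f ` H"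
proof -
  have "pullback f -` f H = H"
    using pullback_mem_image_iff[OF assms(1) add_subgroup_in_P0 add_subgroup_set_add_self] assms(2)
    by blast
  then show ?thesis
    using surj_image_vimage_eq[OF surj_pullback[OF assms(1)], of "f H"] by simp
qed

end
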